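(* For every finite collection $\Gamma$ of pricing policies, the OJS problem admits a posted price mechanism whose regret with respect to $\Gamma$ on $T$-round instances is $O\!\left(\sqrt{CW\cdot T\log|\Gamma|}\right)$.
   Context: OJS problem: there are $N$ slots; slot $i\in[N]$ has bandwidth $c(i)$. $T$ jobs arrive in order $t=1,\dots,T$; job $t$ has arrival slot $a_t$, departure slot $d_t\ge a_t$, length $1\le l_t\le d_t-a_t+1$ and value $v_t\in[0,1)$, chosen by an adversary; jobs are reported at the beginning of their arrival slot in index order. $C\ge\max_ic(i)$ and $W\ge\max_t(d_t-a_t+1)$ are known and independent of $T$. Let $A_t=[a_t,a_t+W-1]$ and $\mathcal I_t=\{[i,i+l_t-1]:a_t\le i\le d_t-l_t+1\}$. For job $t$ the mechanism posts $\bm p_t\in(0,1]^{A_t}$ before learning $d_t,l_t,v_t$ (which are revealed afterwards); the job receives one bandwidth unit of each slot in $\hat A^{\bm p}_t=\emptyset$ if $v_t<\min_{I\in\mathcal I_t}\sum_{i\in I}\bm p(i)$ and otherwise $\hat A^{\bm p}_t=\arg\min_{I\in\mathcal I_t}\sum_{i\in I}\bm p(i)$ (lexicographic ties), paying $\hat q^{\bm p}_t=\sum_{i\in\hat A^{\bm p}_t}\bm p(i)$. Bandwidth vectors $\bm\lambda_t\in\{0,\dots,C\}^{A_t}$: $\bm\lambda_t(i)=c(i)$ if slot $i$ was not allocated to jobs $1,\dots,t-1$; $\bm\lambda_{t+1}(i)=\bm\lambda_t(i)-1$ if slot $i$ is allocated to job $t$ and $i\in A_{t+1}$. Posted prices must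 be feasible: $\bm p_t(i)=1$ whenever $\bm\lambda_t(i)=0$. A pricing policy $\gamma$ maps bandwidth vectors to feasible price vectors; playing it repeatedly from the start gives prices $\bm p^\gamma_t$ and revenue $\sum_t\hat q^{\bm p^\gamma_t}_t$. Regret w.r.t. $\Gamma$: $\max_{\gamma\in\Gamma}\sum_t\hat q^{\bm p^\gamma_t}_t-\mathbb{E}[\sum_t\hat q^{\bm p_t}_t]$. *)

theory Defs
  imports "HOL-Probability.Probability"
begin

text \<open>Slots are natural numbers; the real slots are 1..N. A job is
  (arrival slot, departure slot, length, value).\<close>

record job =
  arr :: nat
  dep :: nat
  len :: nat
  val :: real

text \<open>A price vector is given in absolute slot indexing (only slots of the
  window A_t = [a_t, a_t+W-1] matter).\<close>
type_synonym price = "nat \<Rightarrow> real"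

definition starts :: "job \<Rightarrow> nat set" where
  "starts j = {arr j .. dep j + 1 - len j}"

definition icost :: "price \<Rightarrow> job \<Rightarrow> nat \<Rightarrow> real" where
  "icost p j i = (\<Sum>k\<in>{i..<i + len j}. p k)"

definition mincost :: "price \<Rightarrow> job \<Rightarrow> real" where
  "mincost p j = Min (icost p j ` starts j)"

text \<open>Lexicographic tie breaking among intervals of equal length = smallest start.\<close>
definition chosen :: "price \<Rightarrow> job \<Rightarrow> nat" where
  "chosen p j = (LEAST i. i \<in> starts j \<and> icost p j i = mincost p j)"

definition alloc :: "price \<Rightarrow> job \<Rightarrow> nat set" where
  "alloc p j = (if val j < mincost p j then {} else {chosen p j ..< chosen p j + len j})"

definition pay :: "price \<Rightarrow> job \<Rightarrow> real" where
  "pay p j = (if val j < mincost p j then 0 else mincost p j)"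

definition used :: "(job \<times> price) list \<Rightarrow> nat \<Rightarrow> nat" where
  "used h i = length (filter (\<lambda>(j, p). i \<in> alloc p j) h)"

definition remain :: "(nat \<Rightarrow> nat) \<Rightarrow> (job \<times> price) list \<Rightarrow> nat \<Rightarrow> nat" where
  "remain c h i = c i - used h i"

text \<open>Bandwidth vector of the window A = [a, a+W-1], relative indexing 0..W-1
  (set to 0 outside the window so that it is a canonical element of {0..C}^W).\<close>
definition bwvec :: "(nat \<Rightarrow> nat) \<Rightarrow> nat \<Rightarrow> (job \<times> price) list \<Rightarrow> nat \<Rightarrow> nat \<Rightarrow> nat" where
  "bwvec c W h a k = (if k < W then remain c h (a + k) else 0)"

text \<open>Pricing policy: maps a (relative) bandwidth vector to a (relative) price vector.\<close>
type_synonym policy = "(nat \<Rightarrow> nat) \<Rightarrow> (nat \<Rightarrow> real)"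

definition feasible_policy :: "nat \<Rightarrow> nat \<Rightarrow> policy \<Rightarrow> bool" where
  "feasible_policy C W \<gamma> \<longleftrightarrow>
     (\<forall>bw. (\<forall>k. (k < W \<longrightarrow> bw k \<le> C) \<and> (W \<le> k \<longrightarrow> bw k = 0)) \<longrightarrow>
        (\<forall>k<W. 0 < \<gamma> bw k \<and> \<gamma> bw k \<le> 1 \<and> (bw k = 0 \<longrightarrow> \<gamma> bw k = 1)))"

definition to_abs :: "nat \<Rightarrow> (nat \<Rightarrow> real) \<Rightarrow> price" where
  "to_abs a q = (\<lambda>i. q (i - a))"

primrec policy_run :: "job list \<Rightarrow> policy \<Rightarrow> (nat \<Rightarrow> nat) \<Rightarrow> nat \<Rightarrow> (job \<times> price) list \<Rightarrow> real" where
  "policy_run [] \<gamma> c W h = 0"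
| "policy_run (j # js) \<gamma> c W h =
     (let p = to_abs (arr j) (\<gamma> (bwvec c W h (arr j)))
      in pay p j + policy_run js \<gamma> c W (h @ [(j, p)]))"

definition policy_revenue :: "policy \<Rightarrow> (nat \<Rightarrow> nat) \<Rightarrow> nat \<Rightarrow> job list \<Rightarrow> real" where
  "policy_revenue \<gamma> c W js = policy_run js \<gamma> c W []"

text \<open>A (randomized) posted price mechanism: given the history (past jobs, with their
  revealed d, l, v, together with the mechanism's own internal signal and posted price
  vector) and the arrival slot of the current job, it draws an internal signal and an
  (absolute) price vector.  Its decision is taken before d_t, l_t, v_t are revealed.\<close>
type_synonym mechanism = "(job \<times> nat \<times> price) list \<Rightarrow> nat \<Rightarrow> (nat \<times> price) pmf"

definition jp :: "(job \<times> nat \<times> price) list \<Rightarrow> (job \<times> price) list" where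
  "jp h = map (\<lambda>(j, s, p). (j, p)) h"

definition feasible_mech :: "(nat \<Rightarrow> nat) \<Rightarrow> nat \<Rightarrow> mechanism \<Rightarrow> bool" where
  "feasible_mech c W M \<longleftrightarrow>
     (\<forall>h a s p. (s, p) \<in> set_pmf (M h a) \<longrightarrow>
        (\<forall>i\<in>{a..<a + W}. 0 < p i \<and> p i \<le> 1 \<and> (remain c (jp h) i = 0 \<longrightarrow> p i = 1)))"

text \<open>Expected revenue of the mechanism on a fixed (oblivious) job sequence.\<close>
primrec mech_run :: "job list \<Rightarrow> mechanism \<Rightarrow> (job \<times> nat \<times> price) list \<Rightarrow> real" where
  "mech_run [] M h = 0"
| "mech_run (j # js) M h =
     measure_pmf.expectation (M h (arr j))
       (\<lambda>(s, p). pay p j + mech_run js M (h @ [(j, s, p)]))"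

definition mech_revenue :: "mechanism \<Rightarrow> job list \<Rightarrow> real" where
  "mech_revenue M js = mech_run js M []"

definition valid_job :: "nat \<Rightarrow> nat \<Rightarrow> job \<Rightarrow> bool" where
  "valid_job N W j \<longleftrightarrow> 1 \<le> arr j \<and> arr j \<le> dep j \<and> dep j \<le> N \<and>
     1 \<le> len j \<and> len j \<le> dep j + 1 - arr j \<and> dep j + 1 - arr j \<le> W \<and>
     0 \<le> val j \<and> val j < 1"

definition valid_jobs :: "nat \<Rightarrow> nat \<Rightarrow> job list \<Rightarrow> bool" where
  "valid_jobs N W js \<longleftrightarrow> (\<forall>j\<in>set js. valid_job N W j) \<and> sorted (map arr js)"

definition valid_bandwidth :: "nat \<Rightarrow> nat \<Rightarrow> (nat \<Rightarrow> nat) \<Rightarrow> bool" where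
  "valid_bandwidth N C c \<longleftrightarrow> (\<forall>i. c i \<le> C) \<and> (\<forall>i. (i < 1 \<or> N < i) \<longrightarrow> c i = 0)"

definition regret :: "policy set \<Rightarrow> (nat \<Rightarrow> nat) \<Rightarrow> nat \<Rightarrow> mechanism \<Rightarrow> job list \<Rightarrow> real" where
  "regret \<Gamma> c W M js = (MAX \<gamma>\<in>\<Gamma>. policy_revenue \<gamma> c W js) - mech_revenue M js"

end

(*
  The mechanism runs Hedge over the policies of Gamma, the gain of a policy in round t being the
  payment it would collect in round t if it had been played from the start.  Sampling is lazy:
  the policy k followed in round t is kept in round t + 1 with probability w_{t+1}(k) / w_t(k)
  of its Hedge weights, and otherwise a policy is redrawn from the Hedge distribution.  The
  followed policy is then Hedge-distributed in every round, so the expected gain of the followed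
  policies is within ln |Gamma| / eta + eta T / 2 of the best policy, and the expected number of
  redraws, sum_t (1 - W_{t+1} / W_t) for the total weights W_t, is at most ln |Gamma| + eta T.

  The mechanism posts the prices of the followed policy only while it is in sync with it, i.e.
  while no slot from the current arrival on is more loaded than in the policy's own run: these
  prices are then feasible and the mechanism earns exactly the policy's gain.  Otherwise it posts
  price 1 everywhere and sells nothing.  It can be out of sync only for jobs arriving before the
  end of the intervals already allocated, and the policy sells to at most 2CW of these, since
  they all occupy slots of a window of 2W slots of capacity at most C.  Hence the regret is at
  most ln |Gamma| / eta + eta T / 2 + 2CW (ln |Gamma| + eta T), which is O(sqrt (CWT ln |Gamma|))
  for eta = sqrt (ln |Gamma| / (CWT)); when CW ln |Gamma| > T the trivial bound T suffices.
*)

theory Submission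
  imports Defs
begin

section \<open>Allocation and slot usage\<close>

lemma finite_starts: "finite (starts j)"
  unfolding starts_def by simp

lemma arr_in_starts: "valid_job N W j \<Longrightarrow> arr j \<in> starts j"
  unfolding valid_job_def starts_def by auto

lemma chosen_optimal:
  assumes "valid_job N W j"
  shows "chosen p j \<in> starts j" "icost p j (chosen p j) = mincost p j"
proof -
  have "mincost p j \<in> icost p j ` starts j"
    unfolding mincost_def using finite_starts arr_in_starts[OF assms] by (intro Min_in) auto
  then have "\<exists>i. i \<in> starts j \<and> icost p j i = mincost p j" by auto
  then have "chosen p j \<in> starts j \<and> icost p j (chosen p j) = mincost p j"
    unfolding chosen_def by (rule LeastI_ex)
  then show "chosen p j \<in> starts j" "icost p j (chosen p j) = mincost p j" by auto
qed

lemma interval_in_window: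
  assumes "valid_job N W j" "i \<in> starts j" "k \<in> {i..<i + len j}"
  shows "k \<in> {arr j..<arr j + W}"
  using assms unfolding valid_job_def starts_def by auto

lemma alloc_subset_window:
  assumes "valid_job N W j"
  shows "alloc p j \<subseteq> {arr j..<arr j + W}"
proof
  fix x assume "x \<in> alloc p j"
  then have "x \<in> {chosen p j..<chosen p j + len j}" unfolding alloc_def by (auto split: if_splits)
  then show "x \<in> {arr j..<arr j + W}" by (rule interval_in_window[OF assms chosen_optimal(1)[OF assms]])
qed

lemma mincost_nonneg:
  assumes "valid_job N W j" "\<And>x. x \<in> {arr j..<arr j + W} \<Longrightarrow> 0 \<le> p x"
  shows "0 \<le> mincost p j"
proof -
  have "0 \<le> icost p j (chosen p j)"
    unfolding icost_def
    using assms interval_in_window[OF assms(1) chosen_optimal(1)[OF assms(1)]]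
    by (intro sum_nonneg) blast
  then show ?thesis using chosen_optimal(2)[OF assms(1)] by simp
qed

lemma pay_nonneg:
  assumes "valid_job N W j" "\<And>x. x \<in> {arr j..<arr j + W} \<Longrightarrow> 0 \<le> p x"
  shows "0 \<le> pay p j"
  using mincost_nonneg[OF assms] unfolding pay_def by simp

lemma pay_less_1: "valid_job N W j \<Longrightarrow> pay p j < 1"
  unfolding pay_def valid_job_def by auto

lemma pay_eq_0_if_alloc_empty: "valid_job N W j \<Longrightarrow> alloc p j = {} \<Longrightarrow> pay p j = 0"
  unfolding pay_def alloc_def valid_job_def by (auto split: if_splits)

lemma alloc_all_ones:
  assumes "valid_job N W j"
  shows "alloc (\<lambda>_. 1) j = {}"
proof -
  have "icost (\<lambda>_. 1) j ` starts j = {real (len j)}"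
    using arr_in_starts[OF assms] unfolding icost_def by auto
  then have "mincost (\<lambda>_. 1) j = real (len j)" unfolding mincost_def by simp
  then show ?thesis using assms unfolding alloc_def valid_job_def by auto
qed

lemma price_less_1_if_alloc:
  assumes "valid_job N W j" "\<And>x. x \<in> {arr j..<arr j + W} \<Longrightarrow> 0 \<le> p x" "x \<in> alloc p j"
  shows "p x < 1"
proof -
  have sold: "\<not> val j < mincost p j" and x: "x \<in> {chosen p j..<chosen p j + len j}"
    using assms(3) unfolding alloc_def by (auto split: if_splits)
  have "p x \<le> icost p j (chosen p j)"
    unfolding icost_def using x assms(2) interval_in_window[OF assms(1) chosen_optimal(1)[OF assms(1)]]
    by (intro member_le_sum) blast+
  then show ?thesis using chosen_optimal(2)[OF assms(1)] sold assms(1)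
    unfolding valid_job_def by auto
qed

lemma used_Nil [simp]: "used [] x = 0"
  unfolding used_def by simp

lemma used_snoc [simp]: "used (h @ [(j, p)]) x = used h x + (if x \<in> alloc p j then 1 else 0)"
  unfolding used_def by simp

lemma used_eq_0_iff: "used h x = 0 \<longleftrightarrow> (\<forall>(j, p)\<in>set h. x \<notin> alloc p j)"
  unfolding used_def by (auto simp: filter_empty_conv)

lemma used_eq_card: "used h x = card {u. u < length h \<and> x \<in> alloc (snd (h ! u)) (fst (h ! u))}"
  unfolding used_def length_filter_conv_card by (simp add: case_prod_beta)

section \<open>Playing a policy from the start\<close>

definition policy_price :: "policy \<Rightarrow> (nat \<Rightarrow> nat) \<Rightarrow> nat \<Rightarrow> (job \<times> price) list \<Rightarrow> nat \<Rightarrow> price"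
  where "policy_price \<gamma> c W h a = to_abs a (\<gamma> (bwvec c W h a))"

definition policy_hist :: "policy \<Rightarrow> (nat \<Rightarrow> nat) \<Rightarrow> nat \<Rightarrow> job list \<Rightarrow> (job \<times> price) list"
  where "policy_hist \<gamma> c W js = foldl (\<lambda>h j. h @ [(j, policy_price \<gamma> c W h (arr j))]) [] js"

definition policy_gain :: "policy \<Rightarrow> (nat \<Rightarrow> nat) \<Rightarrow> nat \<Rightarrow> job list \<Rightarrow> nat \<Rightarrow> real"
  where "policy_gain \<gamma> c W js u = (case policy_hist \<gamma> c W js ! u of (j, p) \<Rightarrow> pay p j)"

lemma policy_hist_Nil [simp]: "policy_hist \<gamma> c W [] = []"
  unfolding policy_hist_def by simp

lemma policy_hist_snoc [simp]:
  "policy_hist \<gamma> c W (js @ [j]) =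
     policy_hist \<gamma> c W js @ [(j, policy_price \<gamma> c W (policy_hist \<gamma> c W js) (arr j))]"
  unfolding policy_hist_def by simp

lemma length_policy_hist [simp]: "length (policy_hist \<gamma> c W js) = length js"
  by (induction js rule: rev_induct) auto

lemma take_policy_hist_append:
  "take (length js) (policy_hist \<gamma> c W (js @ ys)) = policy_hist \<gamma> c W js"
  by (induction ys rule: rev_induct) (simp_all flip: append_assoc)

lemma policy_hist_take:
  "policy_hist \<gamma> c W (take t js) = take t (policy_hist \<gamma> c W js)"
proof (cases "t \<le> length js")
  case True
  then show ?thesis
    using take_policy_hist_append[of "take t js" \<gamma> c W "drop t js"] by simp
qed simp

lemma nth_policy_hist:
  assumes "u < length js"
  shows "policy_hist \<gamma> c W js ! u =
    (js ! u, policy_price \<gamma> c W (policy_hist \<gamma> c W (take u js)) (arr (js ! u)))"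
proof -
  have "policy_hist \<gamma> c W (take (Suc u) js) ! u = policy_hist \<gamma> c W js ! u"
    using assms by (simp add: policy_hist_take)
  then show ?thesis
    using assms by (simp add: take_Suc_conv_app_nth nth_append)
qed

lemma policy_gain_take:
  "u < t \<Longrightarrow> policy_gain \<gamma> c W (take t js) u = policy_gain \<gamma> c W js u"
  unfolding policy_gain_def policy_hist_take by simp

lemma policy_run_eq_sum_list:
  "policy_run js \<gamma> c W h + sum_list (map (\<lambda>(j, p). pay p j) h)
     = sum_list (map (\<lambda>(j, p). pay p j) (foldl (\<lambda>h j. h @ [(j, policy_price \<gamma> c W h (arr j))]) h js))"
proof (induction js arbitrary: h)
  case (Cons j js)
  show ?case
    using Cons.IH[of "h @ [(j, policy_price \<gamma> c W h (arr j))]"]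
    by (simp add: policy_price_def Let_def algebra_simps)
qed simp

lemma policy_revenue_eq_sum:
  "policy_revenue \<gamma> c W js = (\<Sum>u<length js. policy_gain \<gamma> c W js u)"
proof -
  have "policy_revenue \<gamma> c W js = sum_list (map (\<lambda>(j, p). pay p j) (policy_hist \<gamma> c W js))"
    using policy_run_eq_sum_list[of js \<gamma> c W "[]"]
    unfolding policy_revenue_def policy_hist_def by simp
  then show ?thesis
    unfolding policy_gain_def by (simp add: sum_list_sum_nth atLeast0LessThan)
qed

lemma policy_price_feasible:
  assumes "valid_bandwidth N C c" "feasible_policy C W \<gamma>" "x \<in> {a..<a + W}"
  shows "0 < policy_price \<gamma> c W h a x" "policy_price \<gamma> c W h a x \<le> 1"
    "remain c h x = 0 \<Longrightarrow> policy_price \<gamma> c W h a x = 1"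
proof -
  have "remain c h (a + k) \<le> C" for k
    using assms(1) unfolding remain_def valid_bandwidth_def by (meson diff_le_self le_trans)
  then have "\<forall>k. (k < W \<longrightarrow> bwvec c W h a k \<le> C) \<and> (W \<le> k \<longrightarrow> bwvec c W h a k = 0)"
    unfolding bwvec_def by simp
  moreover have "x - a < W" "bwvec c W h a (x - a) = remain c h x"
    using assms(3) unfolding bwvec_def by auto
  ultimately show "0 < policy_price \<gamma> c W h a x" "policy_price \<gamma> c W h a x \<le> 1"
    "remain c h x = 0 \<Longrightarrow> policy_price \<gamma> c W h a x = 1"
    using assms(2) unfolding feasible_policy_def policy_price_def to_abs_def by metis+
qed

lemma used_policy_hist_le:
  assumes "valid_bandwidth N C c" "feasible_policy C W \<gamma>" "\<forall>j\<in>set js. valid_job N W j"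
  shows "used (policy_hist \<gamma> c W js) x \<le> c x"
  using assms(3)
proof (induction js rule: rev_induct)
  case (snoc j js)
  let ?h = "policy_hist \<gamma> c W js"
  let ?p = "policy_price \<gamma> c W ?h (arr j)"
  have j: "valid_job N W j" using snoc.prems by simp
  show ?case
  proof (cases "x \<in> alloc ?p j")
    case True
    have "x \<in> {arr j..<arr j + W}" using alloc_subset_window[OF j, of ?p] True by blast
    moreover have "?p x < 1"
      using price_less_1_if_alloc[OF j _ True] policy_price_feasible(1)[OF assms(1,2)]
      by (simp add: less_imp_le)
    ultimately have "remain c ?h x \<noteq> 0" using policy_price_feasible(3)[OF assms(1,2)] by force
    then show ?thesis using True unfolding remain_def by simp
  next
    case False
    then show ?thesis using snoc by simp
  qed
qed simp

section \<open>Hedge with gains in the unit interval\<close>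

definition hedge_weight :: "real \<Rightarrow> (nat \<Rightarrow> nat \<Rightarrow> real) \<Rightarrow> nat \<Rightarrow> nat \<Rightarrow> real"
  where "hedge_weight \<eta> g t i = exp (- \<eta> * (\<Sum>u<t. 1 - g u i))"

definition hedge_total :: "nat \<Rightarrow> real \<Rightarrow> (nat \<Rightarrow> nat \<Rightarrow> real) \<Rightarrow> nat \<Rightarrow> real"
  where "hedge_total n \<eta> g t = (\<Sum>i<n. hedge_weight \<eta> g t i)"

definition hedge_prob :: "nat \<Rightarrow> real \<Rightarrow> (nat \<Rightarrow> nat \<Rightarrow> real) \<Rightarrow> nat \<Rightarrow> nat \<Rightarrow> real"
  where "hedge_prob n \<eta> g t i = hedge_weight \<eta> g t i / hedge_total n \<eta> g t"

definition hedge_pmf :: "nat \<Rightarrow> real \<Rightarrow> (nat \<Rightarrow> nat \<Rightarrow> real) \<Rightarrow> nat \<Rightarrow> nat pmf"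
  where "hedge_pmf n \<eta> g t = pmf_of_list (map (\<lambda>i. (i, hedge_prob n \<eta> g t i)) [0..<n])"

lemma hedge_weight_pos: "0 < hedge_weight \<eta> g t i"
  unfolding hedge_weight_def by simp

lemma hedge_weight_0 [simp]: "hedge_weight \<eta> g 0 i = 1"
  unfolding hedge_weight_def by simp

lemma hedge_weight_Suc:
  "hedge_weight \<eta> g (Suc t) i = hedge_weight \<eta> g t i * exp (- \<eta> * (1 - g t i))"
  unfolding hedge_weight_def by (simp add: distrib_left exp_add[symmetric])

lemma hedge_prob_cong:
  assumes "\<And>u i. u < t \<Longrightarrow> g u i = g' u i"
  shows "hedge_prob n \<eta> g t = hedge_prob n \<eta> g' t"
proof -
  have "hedge_weight \<eta> g t = hedge_weight \<eta> g' t"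
    unfolding hedge_weight_def using assms by (intro ext arg_cong[where f = exp]) simp
  then show ?thesis unfolding hedge_prob_def hedge_total_def by simp
qed

lemma hedge_total_pos: "0 < n \<Longrightarrow> 0 < hedge_total n \<eta> g t"
  unfolding hedge_total_def using hedge_weight_pos by (intro sum_pos) auto

lemma hedge_total_0: "hedge_total n \<eta> g 0 = real n"
  unfolding hedge_total_def by simp

lemma hedge_weight_le_total: "i < n \<Longrightarrow> hedge_weight \<eta> g t i \<le> hedge_total n \<eta> g t"
  unfolding hedge_total_def using hedge_weight_pos by (intro member_le_sum) (auto intro: less_imp_le)

lemma hedge_prob_nonneg: "0 \<le> hedge_prob n \<eta> g t i"
  unfolding hedge_prob_def hedge_total_def using hedge_weight_pos
  by (simp add: less_imp_le sum_nonneg)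

lemma sum_hedge_prob: "0 < n \<Longrightarrow> (\<Sum>i<n. hedge_prob n \<eta> g t i) = 1"
  unfolding hedge_prob_def using hedge_total_pos[of n \<eta> g t]
  by (simp add: sum_divide_distrib[symmetric] hedge_total_def)

lemma pmf_hedge_pmf:
  assumes "0 < n"
  shows "pmf (hedge_pmf n \<eta> g t) i = (if i < n then hedge_prob n \<eta> g t i else 0)"
    and "set_pmf (hedge_pmf n \<eta> g t) \<subseteq> {..<n}"
proof -
  let ?xs = "map (\<lambda>i. (i, hedge_prob n \<eta> g t i)) [0..<n]"
  have "sum_list (map snd ?xs) = 1"
    using sum_hedge_prob[OF assms] by (simp add: sum_list_distinct_conv_sum_set atLeast0LessThan o_def)
  then have wf: "pmf_of_list_wf ?xs" by (auto intro!: pmf_of_list_wfI hedge_prob_nonneg)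
  have "filter (\<lambda>z. fst z = i) ?xs = map (\<lambda>i. (i, hedge_prob n \<eta> g t i)) (filter (\<lambda>k. k = i) [0..<n])"
    by (simp add: filter_map o_def)
  moreover have "filter (\<lambda>k. k = i) [0..<n] = (if i < n then [i] else [])"
    by (induction n) auto
  ultimately show "pmf (hedge_pmf n \<eta> g t) i = (if i < n then hedge_prob n \<eta> g t i else 0)"
    unfolding hedge_pmf_def pmf_pmf_of_list[OF wf] by simp
  show "set_pmf (hedge_pmf n \<eta> g t) \<subseteq> {..<n}"
    using set_pmf_of_list[OF wf] unfolding hedge_pmf_def by auto
qed

lemma expectation_hedge_pmf:
  assumes "0 < n"
  shows "measure_pmf.expectation (hedge_pmf n \<eta> g t) f = (\<Sum>i<n. hedge_prob n \<eta> g t i * f i)"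
  using pmf_hedge_pmf[OF assms, of \<eta> g t]
  by (subst integral_measure_pmf_real[of "{..<n}"]) (auto simp: mult.commute)

lemma ln_hedge_total_ge:
  assumes "i < n"
  shows "- \<eta> * (\<Sum>u<t. 1 - g u i) \<le> ln (hedge_total n \<eta> g t)"
proof -
  have "ln (hedge_weight \<eta> g t i) \<le> ln (hedge_total n \<eta> g t)"
    using hedge_weight_le_total[OF assms] hedge_weight_pos by (rule ln_mono)
  then show ?thesis unfolding hedge_weight_def by simp
qed

lemma exp_minus_le_quadratic:
  fixes y :: real
  assumes "0 \<le> y"
  shows "exp (- y) \<le> 1 - y + y\<^sup>2 / 2"
proof -
  have pos: "0 < 1 + y + y\<^sup>2 / 2" using assms by (simp add: add_pos_nonneg)
  have "exp (- y) = 1 / exp y" by (simp add: exp_minus inverse_eq_divide)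
  also have "\<dots> \<le> 1 / (1 + y + y\<^sup>2 / 2)"
    using exp_lower_Taylor_quadratic[OF assms] pos by (intro divide_left_mono) auto
  also have "\<dots> \<le> 1 - y + y\<^sup>2 / 2"
  proof -
    have "(1 - y + y\<^sup>2 / 2) * (1 + y + y\<^sup>2 / 2) = 1 + (y\<^sup>2)\<^sup>2 / 4"
      by (simp add: power2_eq_square field_simps)
    then show ?thesis using pos by (simp add: divide_le_eq)
  qed
  finally show ?thesis .
qed

lemma hedge_regret:
  assumes "0 < \<eta>" "i < n" and gains: "\<And>u k. u < T \<Longrightarrow> k < n \<Longrightarrow> 0 \<le> g u k \<and> g u k \<le> 1"
  shows "(\<Sum>u<T. g u i) - ln n / \<eta> - \<eta> * T / 2
    \<le> (\<Sum>u<T. \<Sum>k<n. hedge_prob n \<eta> g u k * g u k)"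
proof -
  define Wt where "Wt = hedge_total n \<eta> g"
  define Q where "Q u = (\<Sum>k<n. hedge_prob n \<eta> g u k * g u k)" for u
  have n: "0 < n" using assms(2) by simp
  have step: "ln (Wt (Suc u)) - ln (Wt u) \<le> - \<eta> * (1 - Q u) + \<eta>\<^sup>2 / 2" if u: "u < T" for u
  proof -
    have quad: "exp (- (\<eta> * (1 - g u k))) \<le> 1 - \<eta> * (1 - g u k) + \<eta>\<^sup>2 / 2" if k: "k < n" for k
    proof -
      have gk: "0 \<le> 1 - g u k" "1 - g u k \<le> 1" using gains[OF u k] by auto
      have "(\<eta> * (1 - g u k))\<^sup>2 \<le> \<eta>\<^sup>2"
        using gk assms(1) by (simp add: power_mult_distrib mult_le_cancel_left1 power_le_one)
      moreover have "0 \<le> \<eta> * (1 - g u k)" using gk assms(1) by simp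
      ultimately show ?thesis using exp_minus_le_quadratic[of "\<eta> * (1 - g u k)"] by linarith
    qed
    have "Wt (Suc u) / Wt u = (\<Sum>k<n. hedge_prob n \<eta> g u k * exp (- (\<eta> * (1 - g u k))))"
      unfolding Wt_def hedge_prob_def hedge_total_def hedge_weight_Suc
      by (simp add: sum_divide_distrib)
    also have "\<dots> \<le> (\<Sum>k<n. hedge_prob n \<eta> g u k * (1 - \<eta> * (1 - g u k) + \<eta>\<^sup>2 / 2))"
      using quad hedge_prob_nonneg by (intro sum_mono mult_left_mono) auto
    also have "\<dots> = (\<Sum>k<n. hedge_prob n \<eta> g u k * (1 - \<eta> + \<eta>\<^sup>2 / 2) + \<eta> * (hedge_prob n \<eta> g u k * g u k))"
      by (intro sum.cong) (simp_all add: algebra_simps)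
    also have "\<dots> = (\<Sum>k<n. hedge_prob n \<eta> g u k) * (1 - \<eta> + \<eta>\<^sup>2 / 2) + \<eta> * Q u"
      unfolding Q_def by (simp add: sum.distrib sum_distrib_left sum_distrib_right)
    also have "\<dots> = 1 - \<eta> * (1 - Q u) + \<eta>\<^sup>2 / 2"
      using sum_hedge_prob[OF n] by (simp add: algebra_simps)
    finally have "Wt (Suc u) / Wt u \<le> 1 - \<eta> * (1 - Q u) + \<eta>\<^sup>2 / 2" .
    moreover have "ln (Wt (Suc u) / Wt u) \<le> Wt (Suc u) / Wt u - 1"
      using hedge_total_pos[OF n] unfolding Wt_def by (intro ln_le_minus_one) simp
    moreover have "ln (Wt (Suc u) / Wt u) = ln (Wt (Suc u)) - ln (Wt u)"
      using hedge_total_pos[OF n, of \<eta> g u] hedge_total_pos[OF n, of \<eta> g "Suc u"]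
      unfolding Wt_def by (simp add: ln_div)
    ultimately show ?thesis by simp
  qed
  have "- \<eta> * (\<Sum>u<T. 1 - g u i) - ln n \<le> ln (Wt T) - ln (Wt 0)"
    using ln_hedge_total_ge[OF assms(2)] unfolding Wt_def hedge_total_0 by simp
  also have "\<dots> = (\<Sum>u<T. ln (Wt (Suc u)) - ln (Wt u))"
    by (rule sum_lessThan_telescope[symmetric])
  also have "\<dots> \<le> (\<Sum>u<T. - \<eta> * (1 - Q u) + \<eta>\<^sup>2 / 2)"
    using step by (intro sum_mono) auto
  also have "\<dots> = - \<eta> * T + \<eta> * (\<Sum>u<T. Q u) + T * \<eta>\<^sup>2 / 2"
    by (simp add: sum.distrib sum_subtractf sum_distrib_left algebra_simps)
  finally have "\<eta> * (\<Sum>u<T. g u i) - ln n - \<eta>\<^sup>2 * T / 2 \<le> \<eta> * (\<Sum>u<T. Q u)"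
    by (simp add: sum_subtractf algebra_simps)
  moreover have "\<eta> * ((\<Sum>u<T. g u i) - ln n / \<eta> - \<eta> * T / 2) = \<eta> * (\<Sum>u<T. g u i) - ln n - \<eta>\<^sup>2 * T / 2"
    using assms(1) by (simp add: algebra_simps power2_eq_square)
  ultimately have "\<eta> * ((\<Sum>u<T. g u i) - ln n / \<eta> - \<eta> * T / 2) \<le> \<eta> * (\<Sum>u<T. Q u)"
    by linarith
  then have "(\<Sum>u<T. g u i) - ln n / \<eta> - \<eta> * T / 2 \<le> (\<Sum>u<T. Q u)"
    using assms(1) by (rule mult_left_le_imp_le)
  then show ?thesis by (simp add: Q_def)
qed

text \<open>The summand is the probability that the lazy sampler redraws in round \<open>u + 1\<close>.\<close>

lemma sum_hedge_redraw_le: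
  assumes "0 \<le> \<eta>" "0 < n" and gains: "\<And>u k. u < T \<Longrightarrow> k < n \<Longrightarrow> 0 \<le> g u k"
  shows "(\<Sum>u<T. 1 - hedge_total n \<eta> g (Suc u) / hedge_total n \<eta> g u) \<le> ln n + \<eta> * T"
proof -
  define Wt where "Wt = hedge_total n \<eta> g"
  have "(\<Sum>u<T. 1 - Wt (Suc u) / Wt u) \<le> (\<Sum>u<T. ln (Wt u) - ln (Wt (Suc u)))"
  proof (rule sum_mono)
    fix u
    have "ln (Wt (Suc u) / Wt u) \<le> Wt (Suc u) / Wt u - 1"
      using hedge_total_pos[OF assms(2)] unfolding Wt_def by (intro ln_le_minus_one) simp
    moreover have "ln (Wt (Suc u) / Wt u) = ln (Wt (Suc u)) - ln (Wt u)"
      using hedge_total_pos[OF assms(2), of \<eta> g u] hedge_total_pos[OF assms(2), of \<eta> g "Suc u"]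
      unfolding Wt_def by (simp add: ln_div)
    ultimately show "1 - Wt (Suc u) / Wt u \<le> ln (Wt u) - ln (Wt (Suc u))" by simp
  qed
  also have "\<dots> = ln n - ln (Wt T)"
    using sum_lessThan_telescope'[of "\<lambda>u. ln (Wt u)" T] unfolding Wt_def hedge_total_0 by simp
  also have "\<dots> \<le> ln n + \<eta> * T"
  proof -
    have "(\<Sum>u<T. 1 - g u 0) \<le> (\<Sum>u<T. 1)"
      using gains assms(2) by (intro sum_mono) auto
    then have "\<eta> * (\<Sum>u<T. 1 - g u 0) \<le> \<eta> * T" using assms(1) by (intro mult_left_mono) auto
    then show ?thesis
      using ln_hedge_total_ge[OF assms(2), where \<eta> = \<eta> and t = T and g = g]
      unfolding Wt_def by simp
  qed
  finally show ?thesis unfolding Wt_def .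
qed

text \<open>Keeping expert \<open>k\<close> with probability \<open>w\<^sub>s\<^sub>+\<^sub>1(k) / w\<^sub>s(k)\<close> and otherwise redrawing from
  the Hedge distribution of round \<open>s + 1\<close> at a cost \<open>D\<close> leaves that distribution unchanged.\<close>

lemma lazy_hedge_step:
  fixes g :: "nat \<Rightarrow> nat \<Rightarrow> real" and x :: "nat \<Rightarrow> real" and \<eta> D :: real and s :: nat
  assumes "0 < n"
  defines "\<beta> k \<equiv> exp (- \<eta> * (1 - g s k))"
    and "X \<equiv> (\<Sum>i<n. hedge_prob n \<eta> g (Suc s) i * x i)"
  shows "(\<Sum>k<n. hedge_prob n \<eta> g s k * (\<beta> k * x k + (1 - \<beta> k) * (X - D)))
    = X - D * (1 - hedge_total n \<eta> g (Suc s) / hedge_total n \<eta> g s)"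
proof -
  define \<rho> where "\<rho> = hedge_total n \<eta> g (Suc s) / hedge_total n \<eta> g s"
  have q\<beta>: "hedge_prob n \<eta> g s k * \<beta> k = hedge_weight \<eta> g (Suc s) k / hedge_total n \<eta> g s" for k
    unfolding hedge_prob_def \<beta>_def hedge_weight_Suc by simp
  have "(\<Sum>k<n. hedge_prob n \<eta> g s k * \<beta> k * x k)
      = (\<Sum>k<n. hedge_weight \<eta> g (Suc s) k * x k) / hedge_total n \<eta> g s"
    unfolding q\<beta> by (simp add: sum_divide_distrib)
  also have "(\<Sum>k<n. hedge_weight \<eta> g (Suc s) k * x k) = hedge_total n \<eta> g (Suc s) * X"
    unfolding X_def hedge_prob_def using hedge_total_pos[OF assms(1), of \<eta> g "Suc s"]
    by (simp add: sum_distrib_left)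
  finally have stay: "(\<Sum>k<n. hedge_prob n \<eta> g s k * \<beta> k * x k) = \<rho> * X"
    unfolding \<rho>_def by simp
  have redraw: "(\<Sum>k<n. hedge_prob n \<eta> g s k * (1 - \<beta> k)) = 1 - \<rho>"
    using sum_hedge_prob[OF assms(1), of \<eta> g s]
    by (simp add: right_diff_distrib sum_subtractf q\<beta> \<rho>_def hedge_total_def sum_divide_distrib)
  have "(\<Sum>k<n. hedge_prob n \<eta> g s k * (\<beta> k * x k + (1 - \<beta> k) * (X - D)))
      = (\<Sum>k<n. hedge_prob n \<eta> g s k * \<beta> k * x k + hedge_prob n \<eta> g s k * (1 - \<beta> k) * (X - D))"
    by (intro sum.cong) (simp_all add: algebra_simps)
  also have "\<dots> = (\<Sum>k<n. hedge_prob n \<eta> g s k * \<beta> k * x k)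
      + (\<Sum>k<n. hedge_prob n \<eta> g s k * (1 - \<beta> k)) * (X - D)"
    by (simp add: sum.distrib sum_distrib_right)
  also have "\<dots> = X - D * (1 - \<rho>)" unfolding stay redraw by (simp add: algebra_simps)
  finally show ?thesis unfolding \<rho>_def .
qed

section \<open>Tuning the learning rate\<close>

definition learning_rate :: "nat \<Rightarrow> nat \<Rightarrow> nat \<Rightarrow> nat \<Rightarrow> real"
  where "learning_rate n C W T =
    (if 2 \<le> n \<and> 0 < C * W * T then sqrt (ln n / (C * W * T)) else 0)"

lemma learning_rate_nonneg: "0 \<le> learning_rate n C W T"
  unfolding learning_rate_def by simp

lemma tuned_regret_le:
  fixes X T L \<eta> :: real
  assumes X: "1 \<le> X" and T: "0 < T" and L: "0 < L" and XL: "X * L \<le> T"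
    and \<eta>: "\<eta> = sqrt (L / (X * T))"
  shows "L / \<eta> + \<eta> * T / 2 + 2 * X * (L + \<eta> * T) \<le> 6 * sqrt (X * T * L)"
proof -
  define s where "s = sqrt (X * T * L)"
  have XT: "0 < X * T" using X T by simp
  have s: "0 < s" "s\<^sup>2 = X * T * L" unfolding s_def using X T L by simp_all
  have "L / (X * T) = (s / (X * T))\<^sup>2"
    using s XT by (simp add: power_divide power2_eq_square field_simps)
  then have \<eta>_s: "\<eta> = s / (X * T)"
    unfolding \<eta> using s XT by (simp add: real_sqrt_abs)
  have "L / \<eta> = s"
    unfolding \<eta>_s using XT s by (simp add: power2_eq_square field_simps)
  moreover have "\<eta> * T = s / X" "X * (\<eta> * T) = s"
    unfolding \<eta>_s using X T by (simp_all add: field_simps)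
  moreover have "s / X \<le> s" using X s by (simp add: divide_le_eq)
  moreover have "X * L \<le> s"
  proof -
    have "(X * L)\<^sup>2 \<le> X * T * L" using XL X L by (simp add: power2_eq_square mult_left_mono)
    then show ?thesis unfolding s_def using X L by (simp add: real_le_rsqrt)
  qed
  ultimately have "L / \<eta> + \<eta> * T / 2 + 2 * X * (L + \<eta> * T) \<le> s + s / 2 + 2 * s + 2 * s"
    using X by (simp add: algebra_simps)
  also have "\<dots> \<le> 6 * s" using s by simp
  finally show ?thesis unfolding s_def .
qed

lemma le_sqrt_if_le_mult:
  fixes X T L :: real
  assumes "0 \<le> T" "T \<le> X * L"
  shows "T \<le> sqrt (X * T * L)"
proof -
  have "T\<^sup>2 \<le> X * T * L"
    using mult_left_mono[OF assms(2,1)] by (simp add: power2_eq_square mult_ac)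
  then show ?thesis using assms(1) by (simp add: real_le_rsqrt)
qed

section \<open>The lazy Hedge mechanism\<close>

definition policy_gains :: "policy list \<Rightarrow> (nat \<Rightarrow> nat) \<Rightarrow> nat \<Rightarrow> job list \<Rightarrow> nat \<Rightarrow> nat \<Rightarrow> real"
  where "policy_gains gs c W js u i = policy_gain (gs ! i) c W js u"

definition hist_jobs :: "(job \<times> nat \<times> price) list \<Rightarrow> job list"
  where "hist_jobs h = map fst h"

text \<open>The internal signal of the mechanism is the index of the policy it follows.\<close>

definition current_policy :: "(job \<times> nat \<times> price) list \<Rightarrow> nat"
  where "current_policy h = fst (snd (last h))"

text \<open>If \<open>\<gamma>\<close> is in sync with \<open>h\<close> from slot \<open>a\<close> on, every slot of the window that is full
  for \<open>h\<close> is full in \<open>\<gamma>\<close>'s own run, so \<open>\<gamma>\<close>'s prices are feasible for \<open>h\<close>.\<close>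

definition in_sync :: "policy \<Rightarrow> (nat \<Rightarrow> nat) \<Rightarrow> nat \<Rightarrow> (job \<times> nat \<times> price) list \<Rightarrow> nat \<Rightarrow> bool"
  where "in_sync \<gamma> c W h a \<longleftrightarrow> (\<forall>x\<ge>a. used (jp h) x \<le> used (policy_hist \<gamma> c W (hist_jobs h)) x)"

definition mech_price ::
    "policy list \<Rightarrow> (nat \<Rightarrow> nat) \<Rightarrow> nat \<Rightarrow> (job \<times> nat \<times> price) list \<Rightarrow> nat \<Rightarrow> nat \<Rightarrow> price"
  where "mech_price gs c W h a i =
    (if i < length gs \<and> in_sync (gs ! i) c W h a
     then policy_price (gs ! i) c W (policy_hist (gs ! i) c W (hist_jobs h)) a else (\<lambda>_. 1))"

text \<open>For the policy \<open>k\<close> followed in round \<open>t - 1\<close> this is the ratio \<open>w\<^sub>t(k) / w\<^sub>t\<^sub>-\<^sub>1(k)\<close> of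
  its Hedge weights.\<close>

definition stay_prob :: "policy list \<Rightarrow> (nat \<Rightarrow> nat) \<Rightarrow> nat \<Rightarrow> real \<Rightarrow> (job \<times> nat \<times> price) list \<Rightarrow> real"
  where "stay_prob gs c W \<eta> h = (if h = [] then 0
    else exp (- \<eta> * (1 - policy_gains gs c W (hist_jobs h) (length h - 1) (current_policy h))))"

definition next_policy :: "policy list \<Rightarrow> (nat \<Rightarrow> nat) \<Rightarrow> nat \<Rightarrow> real \<Rightarrow> (job \<times> nat \<times> price) list \<Rightarrow> nat pmf"
  where "next_policy gs c W \<eta> h = do {
    stay \<leftarrow> bernoulli_pmf (stay_prob gs c W \<eta> h);
    if stay then return_pmf (current_policy h)
    else hedge_pmf (length gs) \<eta> (policy_gains gs c W (hist_jobs h)) (length h) }"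

definition lazy_hedge_mech :: "policy list \<Rightarrow> (nat \<Rightarrow> nat) \<Rightarrow> nat \<Rightarrow> real \<Rightarrow> mechanism"
  where "lazy_hedge_mech gs c W \<eta> h a =
    map_pmf (\<lambda>i. (i, mech_price gs c W h a i)) (next_policy gs c W \<eta> h)"

lemma jp_snoc [simp]: "jp (h @ [(j, s, p)]) = jp h @ [(j, p)]"
  unfolding jp_def by simp

lemma hist_jobs_snoc [simp]: "hist_jobs (h @ [(j, s, p)]) = hist_jobs h @ [j]"
  unfolding hist_jobs_def by simp

lemma in_sync_snoc:
  assumes "in_sync \<gamma> c W h a" "a \<le> a'"
  shows "in_sync \<gamma> c W
    (h @ [(j, s, policy_price \<gamma> c W (policy_hist \<gamma> c W (hist_jobs h)) (arr j))]) a'"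
  using assms unfolding in_sync_def by simp

lemma mech_price_feasible:
  assumes "valid_bandwidth N C c" "\<forall>\<gamma>\<in>set gs. feasible_policy C W \<gamma>" "x \<in> {a..<a + W}"
  shows "0 < mech_price gs c W h a i x" "mech_price gs c W h a i x \<le> 1"
    "remain c (jp h) x = 0 \<Longrightarrow> mech_price gs c W h a i x = 1"
proof -
  let ?\<gamma> = "gs ! i"
  let ?h = "policy_hist ?\<gamma> c W (hist_jobs h)"
  show "0 < mech_price gs c W h a i x" "mech_price gs c W h a i x \<le> 1"
    using policy_price_feasible(1,2)[OF assms(1) _ assms(3)] assms(2)
    unfolding mech_price_def by auto
  assume full: "remain c (jp h) x = 0"
  show "mech_price gs c W h a i x = 1"
  proof (cases "i < length gs \<and> in_sync ?\<gamma> c W h a")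
    case True
    then have "used (jp h) x \<le> used ?h x" using assms(3) unfolding in_sync_def by auto
    then have "remain c ?h x = 0" using full unfolding remain_def by simp
    then show ?thesis
      using True policy_price_feasible(3)[OF assms(1) _ assms(3)] assms(2)
      unfolding mech_price_def by auto
  qed (auto simp: mech_price_def)
qed

lemma feasible_lazy_hedge_mech:
  assumes "valid_bandwidth N C c" "\<forall>\<gamma>\<in>set gs. feasible_policy C W \<gamma>"
  shows "feasible_mech c W (lazy_hedge_mech gs c W \<eta>)"
  unfolding feasible_mech_def lazy_hedge_mech_def
  using mech_price_feasible[OF assms] by auto

lemma mech_run_lazy_hedge_nonneg:
  assumes "valid_bandwidth N C c" "\<forall>\<gamma>\<in>set gs. feasible_policy C W \<gamma>" "\<forall>j\<in>set js. valid_job N W j"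
  shows "0 \<le> mech_run js (lazy_hedge_mech gs c W \<eta>) h"
  using assms(3)
proof (induction js arbitrary: h)
  case (Cons j js)
  have "0 \<le> pay (mech_price gs c W h (arr j) i) j" for i
    using Cons.prems mech_price_feasible(1)[OF assms(1,2)] by (intro pay_nonneg less_imp_le) auto
  then show ?case
    using Cons by (auto simp: lazy_hedge_mech_def intro!: integral_nonneg_AE AE_pmfI)
qed simp

lemma mech_run_lazy_hedge_Cons:
  fixes j :: job and js :: "job list"
  assumes "gs \<noteq> []" "0 \<le> stay_prob gs c W \<eta> h" "stay_prob gs c W \<eta> h \<le> 1"
  defines "F i \<equiv> pay (mech_price gs c W h (arr j) i) j
    + mech_run js (lazy_hedge_mech gs c W \<eta>) (h @ [(j, i, mech_price gs c W h (arr j) i)])"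
  shows "mech_run (j # js) (lazy_hedge_mech gs c W \<eta>) h =
    stay_prob gs c W \<eta> h * F (current_policy h)
    + (1 - stay_prob gs c W \<eta> h) *
      (\<Sum>i<length gs. hedge_prob (length gs) \<eta> (policy_gains gs c W (hist_jobs h)) (length h) i * F i)"
    (is "_ = ?rhs")
proof -
  have "mech_run (j # js) (lazy_hedge_mech gs c W \<eta>) h
      = measure_pmf.expectation (next_policy gs c W \<eta> h) F"
    unfolding F_def lazy_hedge_mech_def by simp
  also have "\<dots> = ?rhs"
    unfolding next_policy_def using assms(1-3) finite_subset[OF pmf_hedge_pmf(2)]
    by (subst pmf_expectation_bind[of UNIV]) (auto simp: UNIV_bool expectation_hedge_pmf)
  finally show ?thesis .
qed

section \<open>Revenue of the mechanism on a fixed job sequence\<close>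

lemma card_le_by_double_counting:
  assumes "finite U" "finite R"
    and covers: "\<And>u. u \<in> U \<Longrightarrow> A u \<noteq> {} \<and> A u \<subseteq> R"
    and bounded: "\<And>x. x \<in> R \<Longrightarrow> card {u\<in>U. x \<in> A u} \<le> C"
  shows "card U \<le> C * card R"
proof -
  have "card U = (\<Sum>u\<in>U. 1)" by simp
  also have "\<dots> \<le> (\<Sum>u\<in>U. card (A u))"
  proof (rule sum_mono)
    fix u assume "u \<in> U"
    then show "1 \<le> card (A u)"
      using covers finite_subset[OF _ assms(2)] by (simp add: Suc_le_eq card_gt_0_iff)
  qed
  also have "\<dots> = (\<Sum>u\<in>U. \<Sum>x\<in>R. if x \<in> A u then 1 else 0)"
    using covers assms(2) by (intro sum.cong refl) (simp add: sum.If_cases Int_absorb1)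
  also have "\<dots> = (\<Sum>x\<in>R. card {u\<in>U. x \<in> A u})"
    using assms(1) by (subst sum.swap) (simp add: sum.If_cases Int_def)
  also have "\<dots> \<le> C * card R"
    using bounded sum_bounded_above[of R "\<lambda>x. card {u\<in>U. x \<in> A u}" C] by (simp add: mult.commute)
  finally show ?thesis .
qed

definition alloc_horizon :: "(job \<times> price) list \<Rightarrow> nat"
  where "alloc_horizon h = Max (insert 0 (Suc ` (\<Union>(j, p)\<in>set h. alloc p j)))"

lemma finite_allocated: "finite (\<Union>(j, p)\<in>set h. alloc p j)"
  by (intro finite_UN_I) (auto simp: alloc_def split: prod.split)

lemma less_alloc_horizon: "(j, p) \<in> set h \<Longrightarrow> x \<in> alloc p j \<Longrightarrow> x < alloc_horizon h"
  unfolding alloc_horizon_def using finite_allocated[of h]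
  by (subst Suc_le_eq[symmetric], intro Max_ge) fastforce+

lemma alloc_horizon_le:
  assumes "\<And>j p x. (j, p) \<in> set h \<Longrightarrow> x \<in> alloc p j \<Longrightarrow> x < b"
  shows "alloc_horizon h \<le> b"
  unfolding alloc_horizon_def using assms finite_allocated[of h]
  by (intro Max.boundedI) (auto simp: Suc_le_eq)

lemma alloc_horizon_snoc_empty:
  "alloc p j = {} \<Longrightarrow> alloc_horizon (h @ [(j, p)]) = alloc_horizon h"
  unfolding alloc_horizon_def by simp

lemma less_alloc_horizon_if_not_in_sync:
  assumes "\<not> in_sync \<gamma> c W h a"
  shows "a < alloc_horizon (jp h)"
proof -
  obtain x where "a \<le> x" "used (jp h) x > used (policy_hist \<gamma> c W (hist_jobs h)) x"
    using assms unfolding in_sync_def by (auto simp: not_le)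
  moreover from this obtain j p where "(j, p) \<in> set (jp h)" "x \<in> alloc p j"
    using used_eq_0_iff[of "jp h" x] by auto
  ultimately show ?thesis using less_alloc_horizon by fastforce
qed

lemma lazy_mixture_ge:
  fixes x F p :: "nat \<Rightarrow> real"
  assumes "0 \<le> \<beta>" "\<beta> \<le> 1" "0 \<le> B" "(\<Sum>i<n. p i) = 1" "\<And>i. 0 \<le> p i"
    and stay: "x k - B \<le> F k" and redraw: "\<And>i. i < n \<Longrightarrow> x i - D \<le> F i"
  shows "\<beta> * x k + (1 - \<beta>) * ((\<Sum>i<n. p i * x i) - D) - B
    \<le> \<beta> * F k + (1 - \<beta>) * (\<Sum>i<n. p i * F i)"
proof -
  have "\<beta> * (x k - B) \<le> \<beta> * F k" using stay assms(1) by (rule mult_left_mono)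
  moreover have "\<beta> * B \<le> B" using assms(1-3) by (intro mult_left_le_one_le)
  moreover have "(\<Sum>i<n. p i * x i) - D = (\<Sum>i<n. p i * (x i - D))"
    using assms(4) by (simp add: right_diff_distrib sum_subtractf flip: sum_distrib_right)
  moreover have "(\<Sum>i<n. p i * (x i - D)) \<le> (\<Sum>i<n. p i * F i)"
    using redraw assms(5) by (intro sum_mono mult_left_mono) auto
  then have "(1 - \<beta>) * (\<Sum>i<n. p i * (x i - D)) \<le> (1 - \<beta>) * (\<Sum>i<n. p i * F i)"
    using assms(2) by (intro mult_left_mono) auto
  ultimately show ?thesis by (simp add: algebra_simps)
qed

locale lazy_hedge_run =
  fixes N C W :: nat and c :: "nat \<Rightarrow> nat" and gs :: "policy list" and \<eta> :: real
    and J :: "job list"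
  assumes bandwidth: "valid_bandwidth N C c"
    and policies: "\<forall>\<gamma>\<in>set gs. feasible_policy C W \<gamma>"
    and gs_ne: "gs \<noteq> []"
    and jobs: "valid_jobs N W J"
    and \<eta>_nonneg: "0 \<le> \<eta>"
begin

abbreviation "T \<equiv> length J"
abbreviation "n \<equiv> length gs"
abbreviation "M \<equiv> lazy_hedge_mech gs c W \<eta>"
abbreviation "g \<equiv> policy_gains gs c W J"
abbreviation "q \<equiv> hedge_prob n \<eta> g"
abbreviation "Wt \<equiv> hedge_total n \<eta> g"
abbreviation "redraw_cost \<equiv> 2 * real C * real W"

definition sells :: "nat \<Rightarrow> nat \<Rightarrow> bool"
  where "sells i u \<longleftrightarrow> alloc (snd (policy_hist (gs ! i) c W J ! u)) (J ! u) \<noteq> {}"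

definition sales_before :: "nat \<Rightarrow> nat \<Rightarrow> nat \<Rightarrow> nat"
  where "sales_before i t m = card {u. t \<le> u \<and> u < T \<and> arr (J ! u) < m \<and> sells i u}"

text \<open>While the mechanism follows policy \<open>i\<close> out of sync with it, it sells nothing, but this
  can only happen to jobs arriving before the allocation horizon.\<close>

definition desync_penalty :: "(job \<times> nat \<times> price) list \<Rightarrow> nat \<Rightarrow> real"
  where "desync_penalty h i = (if in_sync (gs ! i) c W h (arr (J ! length h)) then 0
    else real (sales_before i (length h) (alloc_horizon (jp h))))"

lemma valid_job_nth: "u < T \<Longrightarrow> valid_job N W (J ! u)"
  using jobs unfolding valid_jobs_def by auto

lemma arr_mono: "u \<le> v \<Longrightarrow> v < T \<Longrightarrow> arr (J ! u) \<le> arr (J ! v)"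
  using jobs unfolding valid_jobs_def by (auto dest: sorted_nth_mono[where i = u and j = v])

lemma feasible_nth: "i < n \<Longrightarrow> feasible_policy C W (gs ! i)"
  using policies by auto

lemma length_hist_jobs: "hist_jobs h = take t J \<Longrightarrow> t \<le> T \<Longrightarrow> length h = t"
  unfolding hist_jobs_def by (metis length_map length_take min_absorb2)

lemma gain_eq_pay:
  assumes "u < T"
  shows "g u i = pay (snd (policy_hist (gs ! i) c W J ! u)) (J ! u)"
  unfolding policy_gains_def policy_gain_def using nth_policy_hist[OF assms] by simp

lemma policy_price_pos:
  assumes "i < n" "u < T" "x \<in> {arr (J ! u)..<arr (J ! u) + W}"
  shows "0 < snd (policy_hist (gs ! i) c W J ! u) x"
  using policy_price_feasible(1)[OF bandwidth feasible_nth[OF assms(1)] assms(3)]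
    nth_policy_hist[OF assms(2)] by simp

lemma gain_nonneg: "i < n \<Longrightarrow> u < T \<Longrightarrow> 0 \<le> g u i"
  unfolding gain_eq_pay
  using pay_nonneg[OF valid_job_nth] policy_price_pos by (simp add: less_imp_le)

lemma gain_le_1: "u < T \<Longrightarrow> g u i \<le> 1"
  unfolding gain_eq_pay using pay_less_1[OF valid_job_nth] by (simp add: less_imp_le)

lemma gain_eq_0_if_not_sells: "u < T \<Longrightarrow> \<not> sells i u \<Longrightarrow> g u i = 0"
  unfolding gain_eq_pay sells_def using pay_eq_0_if_alloc_empty[OF valid_job_nth] by simp

lemma gains_in_unit_interval: "u < T \<Longrightarrow> i < n \<Longrightarrow> 0 \<le> g u i \<and> g u i \<le> 1"
  using gain_nonneg gain_le_1 by simp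

lemma policy_revenue_eq_sum_gains: "policy_revenue (gs ! i) c W J = (\<Sum>u<T. g u i)"
  unfolding policy_revenue_eq_sum policy_gains_def ..

lemma hedge_prob_take: "hedge_prob n \<eta> (policy_gains gs c W (take t J)) t = q t"
  by (rule hedge_prob_cong) (simp add: policy_gains_def policy_gain_take)

lemma stay_prob_eq:
  assumes "hist_jobs h = take (Suc t) J" "t < T" "current_policy h = k"
  shows "stay_prob gs c W \<eta> h = exp (- \<eta> * (1 - g t k))"
proof -
  have "length h = Suc t" using length_hist_jobs[OF assms(1)] assms(2) by simp
  then show ?thesis
    using assms unfolding stay_prob_def policy_gains_def by (auto simp: policy_gain_take)
qed

lemma stay_prob_range:
  assumes "t < T" "k < n"
  shows "0 \<le> exp (- \<eta> * (1 - g t k))" "exp (- \<eta> * (1 - g t k)) \<le> 1"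
  using gain_le_1[OF assms(1), of k] \<eta>_nonneg by (auto simp: mult_nonneg_nonneg)

lemma sales_before_Suc:
  assumes "t < T"
  shows "sales_before i t m = (if arr (J ! t) < m \<and> sells i t then 1 else 0) + sales_before i (Suc t) m"
proof -
  let ?S = "\<lambda>t. {u. t \<le> u \<and> u < T \<and> arr (J ! u) < m \<and> sells i u}"
  have "?S t = (if arr (J ! t) < m \<and> sells i t then {t} else {}) \<union> ?S (Suc t)"
    using assms by (auto simp: le_less Suc_le_eq)
  moreover have "finite (?S (Suc t))" by (rule finite_subset[of _ "{..<T}"]) auto
  ultimately show ?thesis unfolding sales_before_def by (auto simp: card_insert_if)
qed

lemma sales_before_T: "sales_before i T m = 0"
  unfolding sales_before_def by simp

text \<open>All these jobs are allocated slots in \<open>[arr (J ! t), arr (J ! t) + 2W)\<close>, and policy \<open>i\<close>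
  allocates each slot at most \<open>C\<close> times.\<close>

lemma sales_before_le:
  assumes "t < T" "m \<le> arr (J ! t) + W" "i < n"
  shows "sales_before i t m \<le> C * (2 * W)"
proof -
  define H where "H = policy_hist (gs ! i) c W J"
  define A where "A u = alloc (snd (H ! u)) (J ! u)" for u
  define U where "U = {u. t \<le> u \<and> u < T \<and> arr (J ! u) < m \<and> sells i u}"
  have "card U \<le> C * card {arr (J ! t)..<arr (J ! t) + 2 * W}"
  proof (rule card_le_by_double_counting)
    show "finite U" unfolding U_def by (rule finite_subset[of _ "{..<T}"]) auto
    fix u assume "u \<in> U"
    then have u: "t \<le> u" "u < T" "arr (J ! u) < m" "sells i u" unfolding U_def by auto
    have "A u \<subseteq> {arr (J ! u)..<arr (J ! u) + W}"
      unfolding A_def by (rule alloc_subset_window[OF valid_job_nth[OF u(2)]])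
    moreover have "arr (J ! t) \<le> arr (J ! u)" using arr_mono u by simp
    ultimately show "A u \<noteq> {} \<and> A u \<subseteq> {arr (J ! t)..<arr (J ! t) + 2 * W}"
      using u(3,4) assms(2) unfolding A_def H_def sells_def by auto
  next
    fix x
    have "{u\<in>U. x \<in> A u} \<subseteq> {u. u < length H \<and> x \<in> alloc (snd (H ! u)) (fst (H ! u))}"
      unfolding U_def A_def H_def using nth_policy_hist by fastforce
    then have "card {u\<in>U. x \<in> A u} \<le> used H x"
      unfolding used_eq_card by (rule card_mono[rotated]) simp
    also have "\<dots> \<le> C"
      using used_policy_hist_le[OF bandwidth feasible_nth[OF assms(3)]] jobs bandwidth
      unfolding H_def valid_jobs_def valid_bandwidth_def by (meson le_trans)
    finally show "card {u\<in>U. x \<in> A u} \<le> C" .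
  qed simp
  then show ?thesis unfolding sales_before_def U_def by simp
qed

lemma alloc_horizon_le_window_end:
  assumes "hist_jobs h = take t J" "t < T"
  shows "alloc_horizon (jp h) \<le> arr (J ! t) + W"
proof (rule alloc_horizon_le)
  fix j p x assume jp: "(j, p) \<in> set (jp h)" "x \<in> alloc p j"
  then have "j \<in> set (hist_jobs h)" unfolding jp_def hist_jobs_def by (auto intro: rev_image_eqI)
  then have "j \<in> set (take t J)" using assms(1) by simp
  then obtain u where "u < t" "j = J ! u" using assms(2) by (auto simp: in_set_conv_nth)
  moreover have "alloc p (J ! u) \<subseteq> {arr (J ! u)..<arr (J ! u) + W}"
    using \<open>u < t\<close> assms(2) by (intro alloc_subset_window[OF valid_job_nth]) simp
  moreover have "arr (J ! u) \<le> arr (J ! t)" using \<open>u < t\<close> assms(2) by (intro arr_mono) auto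
  ultimately show "x < arr (J ! t) + W" using jp(2) by auto
qed

lemma desync_penalty_nonneg: "0 \<le> desync_penalty h i"
  unfolding desync_penalty_def by simp

lemma desync_penalty_Nil: "desync_penalty [] i = 0"
  unfolding desync_penalty_def in_sync_def jp_def by simp

lemma desync_penalty_le:
  assumes "hist_jobs h = take t J" "t < T" "i < n"
  shows "desync_penalty h i \<le> redraw_cost"
proof -
  have "desync_penalty h i \<le> real (sales_before i t (alloc_horizon (jp h)))"
    unfolding desync_penalty_def using length_hist_jobs[OF assms(1)] assms(2) by simp
  also have "\<dots> \<le> real (C * (2 * W))"
    using sales_before_le[OF assms(2) alloc_horizon_le_window_end[OF assms(1,2)] assms(3)]
    by (simp only: of_nat_le_iff)
  finally show ?thesis by (simp add: mult_ac)
qed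

lemma gain_minus_penalty_le_pay:
  assumes t: "t < T" and h: "hist_jobs h = take t J" and i: "i < n"
  defines "P \<equiv> mech_price gs c W h (arr (J ! t)) i"
  shows "g t i - desync_penalty h i \<le> pay P (J ! t) - desync_penalty (h @ [(J ! t, i, P)]) i"
proof -
  let ?j = "J ! t" and ?\<gamma> = "gs ! i"
  let ?h' = "h @ [(?j, i, P)]"
  have lh: "length h = t" using length_hist_jobs[OF h] t by simp
  have j: "valid_job N W ?j" using valid_job_nth[OF t] .
  show ?thesis
  proof (cases "in_sync ?\<gamma> c W h (arr ?j)")
    case True
    have P: "P = policy_price ?\<gamma> c W (policy_hist ?\<gamma> c W (take t J)) (arr ?j)"
      unfolding P_def mech_price_def using True i h by simp
    have "desync_penalty ?h' i = 0"
    proof (cases "Suc t < T")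
      case True
      then have "arr ?j \<le> arr (J ! Suc t)" using arr_mono[of t "Suc t"] by simp
      then have "in_sync ?\<gamma> c W ?h' (arr (J ! Suc t))"
        using in_sync_snoc[OF \<open>in_sync ?\<gamma> c W h (arr ?j)\<close>] h P by simp
      then show ?thesis unfolding desync_penalty_def using lh by simp
    next
      case False
      then have "Suc t = T" using t by simp
      then show ?thesis unfolding desync_penalty_def using lh sales_before_T by simp
    qed
    moreover have "g t i = pay P ?j" using gain_eq_pay[OF t] nth_policy_hist[OF t] P by simp
    ultimately show ?thesis using desync_penalty_nonneg[of h i] by simp
  next
    case False
    have "P = (\<lambda>_. 1)" unfolding P_def mech_price_def using False by simp
    then have no_sale: "alloc P ?j = {}" using alloc_all_ones[OF j] by simp
    have "arr ?j < alloc_horizon (jp h)" using less_alloc_horizon_if_not_in_sync[OF False] .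
    then have "sales_before i t (alloc_horizon (jp h))
        = (if sells i t then 1 else 0) + sales_before i (Suc t) (alloc_horizon (jp h))"
      using sales_before_Suc[OF t] by simp
    moreover have "desync_penalty h i = real (sales_before i t (alloc_horizon (jp h)))"
      unfolding desync_penalty_def using False lh by simp
    moreover have "desync_penalty ?h' i \<le> real (sales_before i (Suc t) (alloc_horizon (jp h)))"
      unfolding desync_penalty_def using no_sale lh by (simp add: alloc_horizon_snoc_empty)
    moreover have "g t i \<le> (if sells i t then 1 else 0)"
      using gain_le_1[OF t] gain_eq_0_if_not_sells[OF t] by simp
    ultimately show ?thesis using pay_eq_0_if_alloc_empty[OF j no_sale] by (auto split: if_splits)
  qed
qed

text \<open>Expected gain of the followed policies in rounds \<open>s + 1, \<dots>, s + m\<close> when policy \<open>k\<close> was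
  followed in round \<open>s\<close>, if every redraw costs \<open>redraw_cost\<close>.\<close>

fun lazy_value :: "nat \<Rightarrow> nat \<Rightarrow> nat \<Rightarrow> real" where
  "lazy_value 0 s k = 0"
| "lazy_value (Suc m) s k =
    exp (- \<eta> * (1 - g s k)) * (g (Suc s) k + lazy_value m (Suc s) k)
    + (1 - exp (- \<eta> * (1 - g s k))) *
      ((\<Sum>i<n. q (Suc s) i * (g (Suc s) i + lazy_value m (Suc s) i)) - redraw_cost)"

lemma lazy_value_le_mech_run:
  assumes "Suc s + m = T" "hist_jobs h = take (Suc s) J" "current_policy h = k" "k < n"
  shows "lazy_value m s k - desync_penalty h k \<le> mech_run (drop (Suc s) J) M h"
  using assms
proof (induction m arbitrary: s h k)
  case 0
  then show ?case using desync_penalty_nonneg[of h k] by simp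
next
  case (Suc m)
  let ?t = "Suc s"
  have t: "?t < T" and s: "s < T" using Suc.prems(1) by auto
  have lh: "length h = ?t" using length_hist_jobs[OF Suc.prems(2)] t by simp
  define P where "P i = mech_price gs c W h (arr (J ! ?t)) i" for i
  define F where
    "F i = pay (P i) (J ! ?t) + mech_run (drop (Suc ?t) J) M (h @ [(J ! ?t, i, P i)])" for i
  define \<beta> where "\<beta> = exp (- \<eta> * (1 - g s k))"
  have \<beta>: "\<beta> = stay_prob gs c W \<eta> h" "0 \<le> \<beta>" "\<beta> \<le> 1"
    unfolding \<beta>_def
    using stay_prob_eq[OF Suc.prems(2) s Suc.prems(3)] stay_prob_range[OF s Suc.prems(4)] by auto
  have "drop ?t J = J ! ?t # drop (Suc ?t) J" using t by (simp add: Cons_nth_drop_Suc)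
  then have run: "mech_run (drop ?t J) M h = \<beta> * F k + (1 - \<beta>) * (\<Sum>i<n. q ?t i * F i)"
    using mech_run_lazy_hedge_Cons[OF gs_ne, where c = c and W = W and \<eta> = \<eta> and h = h]
      \<beta> Suc.prems(2,3) lh
    by (simp add: F_def P_def hedge_prob_take)
  have F: "g ?t i + lazy_value m ?t i - desync_penalty h i \<le> F i" if i: "i < n" for i
  proof -
    have "hist_jobs (h @ [(J ! ?t, i, P i)]) = take (Suc ?t) J"
      using Suc.prems(2) t by (simp add: take_Suc_conv_app_nth)
    then have "lazy_value m ?t i - desync_penalty (h @ [(J ! ?t, i, P i)]) i
        \<le> mech_run (drop (Suc ?t) J) M (h @ [(J ! ?t, i, P i)])"
      using Suc.IH[of ?t] Suc.prems(1) i by (simp add: current_policy_def)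
    then show ?thesis
      using gain_minus_penalty_le_pay[OF t Suc.prems(2) i] unfolding F_def P_def by simp
  qed
  have "lazy_value (Suc m) s k - desync_penalty h k
      \<le> \<beta> * F k + (1 - \<beta>) * (\<Sum>i<n. q ?t i * F i)"
    unfolding lazy_value.simps \<beta>_def[symmetric]
  proof (rule lazy_mixture_ge)
    show "g ?t k + lazy_value m ?t k - desync_penalty h k \<le> F k" by (rule F[OF Suc.prems(4)])
    show "g ?t i + lazy_value m ?t i - redraw_cost \<le> F i" if "i < n" for i
      using F[OF that] desync_penalty_le[OF Suc.prems(2) t that] by simp
  qed (use \<beta> desync_penalty_nonneg sum_hedge_prob gs_ne hedge_prob_nonneg in auto)
  then show ?case unfolding run .
qed

lemma mech_run_ge_lazy_value:
  assumes "0 < T"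
  shows "(\<Sum>i<n. q 0 i * (g 0 i + lazy_value (T - 1) 0 i)) \<le> mech_run J M []"
proof -
  define P where "P i = mech_price gs c W [] (arr (J ! 0)) i" for i
  define F where "F i = pay (P i) (J ! 0) + mech_run (drop 1 J) M [(J ! 0, i, P i)]" for i
  have J: "J = J ! 0 # drop 1 J" using assms by (cases J) auto
  have run: "mech_run J M [] = (\<Sum>i<n. q 0 i * F i)"
    using hedge_prob_take[of 0]
    by (subst J, subst mech_run_lazy_hedge_Cons[OF gs_ne])
      (simp_all add: stay_prob_def hist_jobs_def F_def P_def)
  have "g 0 i + lazy_value (T - 1) 0 i \<le> F i" if i: "i < n" for i
  proof -
    have "J \<noteq> []" using assms by auto
    have "hist_jobs [(J ! 0, i, P i)] = take 1 J" using assms by (cases J) (auto simp: hist_jobs_def)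
    then have "lazy_value (T - 1) 0 i - desync_penalty [(J ! 0, i, P i)] i
        \<le> mech_run (drop 1 J) M [(J ! 0, i, P i)]"
      using lazy_value_le_mech_run[of 0 "T - 1"] assms i by (simp add: current_policy_def)
    moreover have "g 0 i - desync_penalty [] i \<le> pay (P i) (J ! 0) - desync_penalty [(J ! 0, i, P i)] i"
      using gain_minus_penalty_le_pay[of 0 "[]" i] \<open>J \<noteq> []\<close> i
      unfolding P_def by (simp add: hist_jobs_def)
    ultimately show ?thesis unfolding F_def using desync_penalty_Nil[of i] by simp
  qed
  then show ?thesis unfolding run using hedge_prob_nonneg by (intro sum_mono mult_left_mono) auto
qed

lemma hedge_average_lazy_value:
  "(\<Sum>k<n. q s k * lazy_value m s k)
     = (\<Sum>u\<in>{s..<s + m}.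
          (\<Sum>i<n. q (Suc u) i * g (Suc u) i) - redraw_cost * (1 - Wt (Suc u) / Wt u))"
proof (induction m arbitrary: s)
  case (Suc m)
  define x where "x i = g (Suc s) i + lazy_value m (Suc s) i" for i
  have "(\<Sum>k<n. q s k * lazy_value (Suc m) s k)
      = (\<Sum>i<n. q (Suc s) i * x i) - redraw_cost * (1 - Wt (Suc s) / Wt s)"
    unfolding lazy_value.simps x_def[symmetric] using gs_ne by (intro lazy_hedge_step) simp
  also have "(\<Sum>i<n. q (Suc s) i * x i)
      = (\<Sum>i<n. q (Suc s) i * g (Suc s) i) + (\<Sum>i<n. q (Suc s) i * lazy_value m (Suc s) i)"
    unfolding x_def by (simp add: algebra_simps sum.distrib)
  finally show ?case using Suc.IH[of "Suc s"] by (simp add: sum.atLeast_Suc_lessThan)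
qed simp

lemma mech_revenue_ge:
  assumes "0 < T"
  shows "(\<Sum>u<T. \<Sum>i<n. q u i * g u i) - redraw_cost * (\<Sum>u<T - 1. 1 - Wt (Suc u) / Wt u)
    \<le> mech_revenue M J"
proof -
  have T: "Suc (T - 1) = T" using assms by simp
  have "(\<Sum>i<n. q 0 i * (g 0 i + lazy_value (T - 1) 0 i))
      = (\<Sum>i<n. q 0 i * g 0 i)
        + (\<Sum>u<T - 1. (\<Sum>i<n. q (Suc u) i * g (Suc u) i)
            - redraw_cost * (1 - Wt (Suc u) / Wt u))"
    using hedge_average_lazy_value[of 0 "T - 1"]
    by (simp add: algebra_simps sum.distrib atLeast0LessThan)
  also have "\<dots> = (\<Sum>u<T. \<Sum>i<n. q u i * g u i)
      - redraw_cost * (\<Sum>u<T - 1. 1 - Wt (Suc u) / Wt u)"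
    using sum.lessThan_Suc_shift[of "\<lambda>u. \<Sum>i<n. q u i * g u i" "T - 1"]
    unfolding T by (simp add: sum_subtractf flip: sum_distrib_left)
  finally show ?thesis using mech_run_ge_lazy_value[OF assms] unfolding mech_revenue_def by simp
qed

lemma mech_revenue_nonneg: "0 \<le> mech_revenue M J"
  using mech_run_lazy_hedge_nonneg[OF bandwidth policies] jobs
  unfolding valid_jobs_def mech_revenue_def by blast

lemma policy_regret_le:
  assumes "0 < T" "i < n"
  shows "policy_revenue (gs ! i) c W J - mech_revenue M J
    \<le> (\<Sum>u<T. g u i) - (\<Sum>u<T. \<Sum>k<n. q u k * g u k)
      + redraw_cost * (ln n + \<eta> * T)"
proof -
  have "(\<Sum>u<T - 1. 1 - Wt (Suc u) / Wt u) \<le> ln n + \<eta> * (T - 1)"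
    using gs_ne gain_nonneg by (intro sum_hedge_redraw_le \<eta>_nonneg) auto
  also have "\<dots> \<le> ln n + \<eta> * T" using \<eta>_nonneg by (simp add: mult_left_mono)
  finally have "redraw_cost * (\<Sum>u<T - 1. 1 - Wt (Suc u) / Wt u)
      \<le> redraw_cost * (ln n + \<eta> * T)"
    by (intro mult_left_mono) auto
  then show ?thesis using mech_revenue_ge[OF assms(1)] policy_revenue_eq_sum_gains[of i] by simp
qed

lemma policy_revenue_zero_capacity:
  assumes "C = 0" "i < n"
  shows "policy_revenue (gs ! i) c W J = 0"
proof -
  define H where "H = policy_hist (gs ! i) c W J"
  have "used H x = 0" for x
    using used_policy_hist_le[OF bandwidth feasible_nth[OF assms(2)]] jobs bandwidth assms(1)
    unfolding H_def valid_jobs_def valid_bandwidth_def by (metis le_zero_eq)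
  then have "\<not> sells i u" if "u < T" for u
    using nth_mem[of u H] nth_policy_hist[OF that] that
    unfolding used_eq_0_iff sells_def H_def by fastforce
  then show ?thesis unfolding policy_revenue_eq_sum_gains using gain_eq_0_if_not_sells by simp
qed

lemma policy_revenue_le_rounds: "policy_revenue (gs ! i) c W J \<le> T"
  unfolding policy_revenue_eq_sum_gains
  using sum_bounded_above[of "{..<T}" "\<lambda>u. g u i" 1] gain_le_1 by simp

lemma policy_regret_le_sqrt_nondegenerate:
  assumes i: "i < n" and \<eta>: "\<eta> = learning_rate n C W T" and "0 < T" "0 < C" "2 \<le> n"
  shows "policy_revenue (gs ! i) c W J - mech_revenue M J \<le> 6 * sqrt (C * W * T * ln n)"
proof -
  define X L where "X = real C * real W" and "L = ln (real n)"
  have "valid_job N W (J ! 0)" using valid_job_nth[OF assms(3)] .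
  then have "0 < W" unfolding valid_job_def by auto
  then have "1 \<le> C * W" using assms(4) by (simp add: Suc_le_eq)
  then have X: "1 \<le> X" unfolding X_def by (metis of_nat_1 of_nat_le_iff of_nat_mult)
  have L: "0 < L" using assms(5) unfolding L_def by (intro ln_gt_zero) simp
  have rhs: "sqrt (C * W * T * ln n) = sqrt (X * T * L)" unfolding X_def L_def by (simp add: mult_ac)
  show ?thesis
  proof (cases "X * L \<le> T")
    case True
    have \<eta>_eq: "\<eta> = sqrt (L / (X * T))"
      using \<eta> assms(3-5) \<open>0 < W\<close> unfolding learning_rate_def X_def L_def by simp
    then have "0 < \<eta>" using X L assms(3) by simp
    then have "(\<Sum>u<T. g u i) - (\<Sum>u<T. \<Sum>k<n. q u k * g u k) \<le> L / \<eta> + \<eta> * T / 2"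
      using hedge_regret[OF _ i gains_in_unit_interval] unfolding L_def by fastforce
    then have "policy_revenue (gs ! i) c W J - mech_revenue M J
        \<le> L / \<eta> + \<eta> * T / 2 + 2 * X * (L + \<eta> * T)"
      using policy_regret_le[OF assms(3) i] unfolding X_def L_def by (simp add: mult_ac)
    also have "\<dots> \<le> 6 * sqrt (X * T * L)"
      using tuned_regret_le[OF X _ L True \<eta>_eq] assms(3) by simp
    finally show ?thesis unfolding rhs .
  next
    case False
    then have "policy_revenue (gs ! i) c W J \<le> sqrt (X * T * L)"
      using policy_revenue_le_rounds[of i] le_sqrt_if_le_mult[of T X L] by simp
    moreover have "0 \<le> sqrt (X * T * L)" using X L by simp
    ultimately show ?thesis using mech_revenue_nonneg unfolding rhs by linarith
  qed
qed

lemma policy_regret_le_sqrt: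
  assumes i: "i < n" and \<eta>: "\<eta> = learning_rate n C W T"
  shows "policy_revenue (gs ! i) c W J - mech_revenue M J \<le> 6 * sqrt (C * W * T * ln n)"
proof -
  have "1 \<le> real n" using gs_ne by (cases gs) auto
  then have rhs: "0 \<le> 6 * sqrt (C * W * T * ln n)" by simp
  have "n \<noteq> 0" using gs_ne by simp
  then consider "T = 0 \<or> C = 0" | "0 < T" "n = 1" | "0 < T" "0 < C" "2 \<le> n"
    by (cases "T = 0 \<or> C = 0"; cases "n = 1") auto
  then show ?thesis
  proof cases
    case 1
    then have "policy_revenue (gs ! i) c W J = 0"
      using policy_revenue_zero_capacity[OF _ i] policy_revenue_eq_sum_gains[of i] by auto
    then show ?thesis using mech_revenue_nonneg rhs by linarith
  next
    case 2
    then have "\<eta> = 0" "i = 0" using \<eta> i unfolding learning_rate_def by auto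
    moreover have "q u 0 = 1" for u using sum_hedge_prob[of n \<eta> g u] 2 by simp
    ultimately show ?thesis using policy_regret_le[OF 2(1) i] 2 mech_revenue_nonneg by simp
  next
    case 3
    then show ?thesis using policy_regret_le_sqrt_nondegenerate[OF i \<eta>] by simp
  qed
qed

end

lemma regret_le_if_policy_regret_le:
  assumes "finite \<Gamma>" "\<Gamma> \<noteq> {}"
    and "\<And>\<gamma>. \<gamma> \<in> \<Gamma> \<Longrightarrow> policy_revenue \<gamma> c W js - mech_revenue M js \<le> R"
  shows "regret \<Gamma> c W M js \<le> R"
  using assms unfolding regret_def by (simp add: Max_le_iff algebra_simps)

theorem corollary2:
  shows "\<exists>K::real. 0 < K \<and>
    (\<forall>(N::nat) (C::nat) (W::nat) (c::nat \<Rightarrow> nat) (\<Gamma>::policy set) (T::nat).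
       valid_bandwidth N C c \<longrightarrow> finite \<Gamma> \<longrightarrow> \<Gamma> \<noteq> {} \<longrightarrow>
       (\<forall>\<gamma>\<in>\<Gamma>. feasible_policy C W \<gamma>) \<longrightarrow>
       (\<exists>M. feasible_mech c W M \<and>
          (\<forall>js. length js = T \<longrightarrow> valid_jobs N W js \<longrightarrow>
             regret \<Gamma> c W M js \<le>
               K * sqrt (real C * real W * real T * ln (real (card \<Gamma>))))))"
proof (intro exI[of _ 6] conjI allI impI)
  fix N C W :: nat and c :: "nat \<Rightarrow> nat" and \<Gamma> :: "policy set" and T :: nat
  assume bandwidth: "valid_bandwidth N C c" and "finite \<Gamma>" "\<Gamma> \<noteq> {}"
    and policies: "\<forall>\<gamma>\<in>\<Gamma>. feasible_policy C W \<gamma>"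
  obtain gs where gs: "set gs = \<Gamma>" "distinct gs" using finite_distinct_list[OF \<open>finite \<Gamma>\<close>] by blast
  then have n: "length gs = card \<Gamma>" by (metis distinct_card)
  define \<eta> where "\<eta> = learning_rate (card \<Gamma>) C W T"
  show "\<exists>M. feasible_mech c W M \<and> (\<forall>js. length js = T \<longrightarrow> valid_jobs N W js \<longrightarrow>
      regret \<Gamma> c W M js \<le> 6 * sqrt (real C * real W * real T * ln (real (card \<Gamma>))))"
  proof (intro exI[of _ "lazy_hedge_mech gs c W \<eta>"] conjI allI impI)
    show "feasible_mech c W (lazy_hedge_mech gs c W \<eta>)"
      using feasible_lazy_hedge_mech bandwidth policies gs(1) by blast
    fix js assume "length js = T" "valid_jobs N W js"
    then interpret lazy_hedge_run N C W c gs \<eta> js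
      using bandwidth policies gs(1) \<open>\<Gamma> \<noteq> {}\<close> learning_rate_nonneg
      unfolding \<eta>_def by unfold_locales auto
    show "regret \<Gamma> c W M js \<le> 6 * sqrt (real C * real W * real T * ln (real (card \<Gamma>)))"
      using \<open>finite \<Gamma>\<close> \<open>\<Gamma> \<noteq> {}\<close>
    proof (rule regret_le_if_policy_regret_le)
      fix \<gamma> assume "\<gamma> \<in> \<Gamma>"
      then obtain i where "i < length gs" "\<gamma> = gs ! i" using gs(1) by (metis in_set_conv_nth)
      then show "policy_revenue \<gamma> c W js - mech_revenue M js
          \<le> 6 * sqrt (real C * real W * real T * ln (real (card \<Gamma>)))"
        using policy_regret_le_sqrt \<open>length js = T\<close> n unfolding \<eta>_def by simp
    qed
  qed
qed simp

end
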